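(* Every interval graph admits a canonical dominating set.
   Context: A graph $G$ is an interval graph if there are closed intervals $I_v$, $v\in V(G)$, with $uv\in E(G)$ iff $I_u\cap I_v\ne\emptyset$. A set $D\subseteq V(G)$ is a dominating set if every vertex of $G$ is in $D$ or adjacent to a vertex of $D$. Two dominating sets $D,D'$ are adjacent if $|D\triangle D'|=1$. For dominating sets $D_p,D_q$ and an integer $k>0$, write $D_p\leftrightarrow_k D_q$ if there is a sequence $D_0=D_p,\dots,D_\ell=D_q$ ($\ell\ge0$) of dominating sets of $G$ with consecutive sets adjacent and $|D_i|\le k$ for all $i$. A minimum dominating set $D^*$ of $G$ is canonical if $D\leftrightarrow_{|D|+1} D^*$ for every dominating set $D$ of $G$. *)

theory Defs
  imports Complex_Main
begin

definition interval_graph :: "'a set \<Rightarrow> ('a \<Rightarrow> 'a \<Rightarrow> bool) \<Rightarrow> bool" where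
  "interval_graph V E \<longleftrightarrow>
     finite V \<and> (\<forall>u v. E u v \<longrightarrow> u \<in> V \<and> v \<in> V) \<and> (\<forall>v. \<not> E v v) \<and>
     (\<exists>lo hi :: 'a \<Rightarrow> real. (\<forall>v\<in>V. lo v \<le> hi v) \<and>
        (\<forall>u\<in>V. \<forall>v\<in>V. u \<noteq> v \<longrightarrow>
           (E u v \<longleftrightarrow> {lo u..hi u} \<inter> {lo v..hi v} \<noteq> {})))"

definition dominating_set :: "'a set \<Rightarrow> ('a \<Rightarrow> 'a \<Rightarrow> bool) \<Rightarrow> 'a set \<Rightarrow> bool" where
  "dominating_set V E D \<longleftrightarrow> D \<subseteq> V \<and> (\<forall>v\<in>V. v \<in> D \<or> (\<exists>u\<in>D. E v u))"

definition min_dominating_set :: "'a set \<Rightarrow> ('a \<Rightarrow> 'a \<Rightarrow> bool) \<Rightarrow> 'a set \<Rightarrow> bool" where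
  "min_dominating_set V E D \<longleftrightarrow> dominating_set V E D \<and>
     (\<forall>D'. dominating_set V E D' \<longrightarrow> card D \<le> card D')"

definition ds_adjacent :: "'a set \<Rightarrow> 'a set \<Rightarrow> bool" where
  "ds_adjacent D D' \<longleftrightarrow> card ((D - D') \<union> (D' - D)) = 1"

definition reconf :: "'a set \<Rightarrow> ('a \<Rightarrow> 'a \<Rightarrow> bool) \<Rightarrow> nat \<Rightarrow> 'a set \<Rightarrow> 'a set \<Rightarrow> bool" where
  "reconf V E k Dp Dq \<longleftrightarrow>
     (\<exists>xs. xs \<noteq> [] \<and> hd xs = Dp \<and> last xs = Dq \<and>
        (\<forall>D\<in>set xs. dominating_set V E D \<and> card D \<le> k) \<and>
        (\<forall>i. Suc i < length xs \<longrightarrow> ds_adjacent (xs ! i) (xs ! Suc i)))"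

definition canonical_dominating_set :: "'a set \<Rightarrow> ('a \<Rightarrow> 'a \<Rightarrow> bool) \<Rightarrow> 'a set \<Rightarrow> bool" where
  "canonical_dominating_set V E Ds \<longleftrightarrow> min_dominating_set V E Ds \<and>
     (\<forall>D. dominating_set V E D \<longrightarrow> reconf V E (card D + 1) D Ds)"

end

theory Submission
  imports Defs
begin

text \<open>Among the minimum dominating sets of an interval graph take one, Ds, whose sum of right
  endpoints is maximal.  Any dominating set D reaches Ds within size bound card D + 1: if
  Ds \<subseteq> D, delete the vertices of D - Ds one by one; otherwise add some g \<in> Ds - D and then
  delete some x \<in> D - Ds.  Such a pair exists: let u be a vertex not dominated by D \<inter> Ds with
  smallest right endpoint, and g \<in> Ds, x \<in> D neighbours of u.  A vertex dominated by x but not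
  by D - {x} is not dominated by D \<inter> Ds, so it ends no earlier than u; hence replacing x in D by
  any neighbour of u ending no earlier than x keeps D dominating, and likewise for g in Ds.  The
  second fact and the choice of Ds give hi x \<le> hi g, and then the first one shows that
  D - {x} + g dominates.\<close>

lemma dominating_set_mono:
  "dominating_set V E D \<Longrightarrow> D \<subseteq> D' \<Longrightarrow> D' \<subseteq> V \<Longrightarrow> dominating_set V E D'"
  unfolding dominating_set_def by blast

lemma ds_adjacent_Diff_singleton: "x \<in> D \<Longrightarrow> ds_adjacent D (D - {x})"
proof -
  assume "x \<in> D"
  then have "(D - (D - {x})) \<union> ((D - {x}) - D) = {x}" by blast
  then show ?thesis unfolding ds_adjacent_def by simp
qed

lemma ds_adjacent_insert: "g \<notin> D \<Longrightarrow> ds_adjacent D (insert g D)"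
proof -
  assume "g \<notin> D"
  then have "(D - insert g D) \<union> (insert g D - D) = {g}" by blast
  then show ?thesis unfolding ds_adjacent_def by simp
qed

lemma reconf_refl: "dominating_set V E D \<Longrightarrow> card D \<le> k \<Longrightarrow> reconf V E k D D"
  unfolding reconf_def by (rule exI[of _ "[D]"]) auto

lemma reconf_mono:
  assumes "reconf V E k D D'" "k \<le> k'"
  shows "reconf V E k' D D'"
proof -
  obtain xs where "xs \<noteq> []" "hd xs = D" "last xs = D'"
    "\<forall>D\<in>set xs. dominating_set V E D \<and> card D \<le> k"
    "\<forall>i. Suc i < length xs \<longrightarrow> ds_adjacent (xs ! i) (xs ! Suc i)"
    using assms(1) unfolding reconf_def by blast
  then show ?thesis unfolding reconf_def using assms(2) by (intro exI[of _ xs]) auto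
qed

lemma reconf_Cons:
  assumes "dominating_set V E D" "card D \<le> k" "ds_adjacent D D'" "reconf V E k D' Dq"
  shows "reconf V E k D Dq"
proof -
  obtain xs where xs: "xs \<noteq> []" "hd xs = D'" "last xs = Dq"
    "\<forall>D\<in>set xs. dominating_set V E D \<and> card D \<le> k"
    "\<forall>i. Suc i < length xs \<longrightarrow> ds_adjacent (xs ! i) (xs ! Suc i)"
    using assms(4) unfolding reconf_def by blast
  have "\<forall>i. Suc i < length (D # xs) \<longrightarrow> ds_adjacent ((D # xs) ! i) ((D # xs) ! Suc i)"
  proof (intro allI impI)
    fix i assume "Suc i < length (D # xs)"
    then show "ds_adjacent ((D # xs) ! i) ((D # xs) ! Suc i)"
      using xs assms(3) by (cases i) (auto simp: hd_conv_nth)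
  qed
  then show ?thesis unfolding reconf_def
    using xs assms by (intro exI[of _ "D # xs"]) auto
qed

lemma reconf_to_exchange_target:
  assumes "finite V"
    and Ds: "dominating_set V E Ds"
    and exchange: "\<And>D. dominating_set V E D \<Longrightarrow> \<not> Ds \<subseteq> D \<Longrightarrow>
        \<exists>g\<in>Ds - D. \<exists>x\<in>D - Ds. dominating_set V E (insert g (D - {x}))"
  shows "dominating_set V E D \<Longrightarrow> reconf V E (card D + 1) D Ds"
proof (induction "card D + card (D - Ds)" arbitrary: D rule: less_induct)
  case less
  have "D \<subseteq> V" using less.prems unfolding dominating_set_def by blast
  then have finD: "finite D" using \<open>finite V\<close> finite_subset by blast
  consider "D = Ds" | "Ds \<subset> D" | "\<not> Ds \<subseteq> D" by blast
  then show ?case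
  proof cases
    case 1
    then show ?thesis using reconf_refl[OF Ds] by simp
  next
    case 2
    then obtain x where x: "x \<in> D" "x \<notin> Ds" by blast
    have D': "dominating_set V E (D - {x})"
      by (rule dominating_set_mono[OF Ds]) (use 2 x \<open>D \<subseteq> V\<close> in auto)
    have "card (D - {x}) < card D" by (rule card_Diff1_less[OF finD x(1)])
    moreover have "card (D - {x} - Ds) \<le> card (D - Ds)"
      using finD by (intro card_mono) auto
    ultimately have "reconf V E (card (D - {x}) + 1) (D - {x}) Ds"
      by (intro less.hyps[OF _ D']) linarith
    then have "reconf V E (card D + 1) (D - {x}) Ds"
      using \<open>card (D - {x}) < card D\<close> by (elim reconf_mono) simp
    then show ?thesis
      using reconf_Cons[OF less.prems _ ds_adjacent_Diff_singleton[OF x(1)]] by simp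
  next
    case 3
    then obtain g x where g: "g \<in> Ds" "g \<notin> D" and x: "x \<in> D" "x \<notin> Ds"
      and swapped: "dominating_set V E (insert g (D - {x}))"
      using exchange[OF less.prems] by blast
    have swapped_eq: "insert g D - {x} = insert g (D - {x})" using g x by blast
    have "g \<in> V" using g Ds unfolding dominating_set_def by blast
    have D1: "dominating_set V E (insert g D)"
      by (rule dominating_set_mono[OF less.prems]) (use \<open>g \<in> V\<close> \<open>D \<subseteq> V\<close> in auto)
    have card_D1: "card (insert g D) = card D + 1" using finD g by simp
    have card_D2: "card (insert g (D - {x})) = card D"
      using finD g x card_gt_0_iff[of D] by (auto simp: card_Diff_singleton)
    have "insert g (D - {x}) - Ds = (D - Ds) - {x}" using g by blast
    moreover have "card ((D - Ds) - {x}) < card (D - Ds)"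
      using finD x by (intro card_Diff1_less) auto
    ultimately have "reconf V E (card D + 1) (insert g (D - {x})) Ds"
      using less.hyps[OF _ swapped] card_D2 by simp
    then have "reconf V E (card D + 1) (insert g D) Ds"
      using reconf_Cons[OF D1 _ ds_adjacent_Diff_singleton[of x "insert g D"]] x(1) card_D1
      unfolding swapped_eq by simp
    then show ?thesis
      using reconf_Cons[OF less.prems _ ds_adjacent_insert[OF g(2)]] by simp
  qed
qed

lemma min_dominating_set_exists: "finite V \<Longrightarrow> \<exists>D. min_dominating_set V E D"
proof -
  have "dominating_set V E V" unfolding dominating_set_def by blast
  from ex_has_least_nat[of "dominating_set V E" V card, OF this]
  show ?thesis unfolding min_dominating_set_def by blast
qed

locale interval_model =
  fixes V :: "'a set" and E :: "'a \<Rightarrow> 'a \<Rightarrow> bool" and lo hi :: "'a \<Rightarrow> real"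
  assumes finite_V: "finite V"
    and lo_le_hi: "\<And>v. v \<in> V \<Longrightarrow> lo v \<le> hi v"
    and adjacent_iff: "\<And>u v. u \<in> V \<Longrightarrow> v \<in> V \<Longrightarrow> u \<noteq> v \<Longrightarrow>
        E u v \<longleftrightarrow> {lo u..hi u} \<inter> {lo v..hi v} \<noteq> {}"
begin

definition meets :: "'a \<Rightarrow> 'a \<Rightarrow> bool" where
  "meets u v \<longleftrightarrow> lo u \<le> hi v \<and> lo v \<le> hi u"

lemma eq_or_adjacent_iff_meets:
  assumes "u \<in> V" "v \<in> V"
  shows "u = v \<or> E u v \<longleftrightarrow> meets u v"
proof (cases "u = v")
  case False
  have "{lo u..hi u} \<inter> {lo v..hi v} \<noteq> {} \<longleftrightarrow> meets u v"
  proof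
    assume "{lo u..hi u} \<inter> {lo v..hi v} \<noteq> {}"
    then show "meets u v" unfolding meets_def by auto
  next
    assume "meets u v"
    then have "max (lo u) (lo v) \<in> {lo u..hi u} \<inter> {lo v..hi v}"
      using lo_le_hi assms unfolding meets_def by auto
    then show "{lo u..hi u} \<inter> {lo v..hi v} \<noteq> {}" by blast
  qed
  then show ?thesis using adjacent_iff[OF assms False] False by simp
qed (use lo_le_hi assms in \<open>simp add: meets_def\<close>)

lemma dominating_set_iff_meets:
  "dominating_set V E D \<longleftrightarrow> D \<subseteq> V \<and> (\<forall>v\<in>V. \<exists>u\<in>D. meets v u)"
  unfolding dominating_set_def using eq_or_adjacent_iff_meets by blast

lemma dominating_set_exchange:
  assumes S: "dominating_set V E S" and "t \<in> V" "lo t \<le> c" "hi s \<le> hi t"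
    and only_s: "\<And>w. w \<in> V \<Longrightarrow> \<forall>a\<in>S - {s}. \<not> meets w a \<Longrightarrow> c \<le> hi w"
  shows "dominating_set V E (insert t (S - {s}))"
  unfolding dominating_set_iff_meets
proof (intro conjI ballI)
  show "insert t (S - {s}) \<subseteq> V" using S \<open>t \<in> V\<close> unfolding dominating_set_def by blast
next
  fix w assume "w \<in> V"
  then obtain a where "a \<in> S" "meets w a" using S unfolding dominating_set_iff_meets by blast
  show "\<exists>a\<in>insert t (S - {s}). meets w a"
  proof (cases "\<exists>a\<in>S - {s}. meets w a")
    case False
    then have "a = s" "c \<le> hi w" using \<open>a \<in> S\<close> \<open>meets w a\<close> only_s[OF \<open>w \<in> V\<close>] by auto
    then have "meets w t" using \<open>meets w a\<close> assms(3,4) by (auto simp: meets_def)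
    then show ?thesis by blast
  qed blast
qed

definition rightmost_min_dominating_set :: "'a set \<Rightarrow> bool" where
  "rightmost_min_dominating_set Ds \<longleftrightarrow> min_dominating_set V E Ds \<and>
     (\<forall>D. min_dominating_set V E D \<longrightarrow> sum hi D \<le> sum hi Ds)"

lemma rightmost_min_dominating_set_exists: "\<exists>Ds. rightmost_min_dominating_set Ds"
proof -
  have "finite {D. min_dominating_set V E D}"
    using finite_V unfolding min_dominating_set_def dominating_set_def
    by (auto intro: finite_subset[of _ "Pow V"])
  moreover have "{D. min_dominating_set V E D} \<noteq> {}"
    using min_dominating_set_exists[OF finite_V] by blast
  ultimately obtain Ds
    where "is_arg_min (\<lambda>D. - sum hi D) (\<lambda>D. D \<in> {D. min_dominating_set V E D}) Ds"
    using ex_is_arg_min_if_finite by blast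
  then show ?thesis
    unfolding rightmost_min_dominating_set_def is_arg_min_linorder by auto
qed

lemma rightmost_exchange_bound:
  assumes Ds: "rightmost_min_dominating_set Ds" and "g \<in> Ds" "y \<in> V" "lo y \<le> c"
    and only_g: "\<And>w. w \<in> V \<Longrightarrow> \<forall>a\<in>Ds - {g}. \<not> meets w a \<Longrightarrow> c \<le> hi w"
  shows "hi y \<le> hi g"
proof (rule ccontr)
  assume "\<not> hi y \<le> hi g"
  define D' where "D' = insert y (Ds - {g})"
  have min: "min_dominating_set V E Ds"
    and maximal: "\<And>D. min_dominating_set V E D \<Longrightarrow> sum hi D \<le> sum hi Ds"
    using Ds unfolding rightmost_min_dominating_set_def by auto
  have finite_Ds: "finite Ds"
    using min finite_V unfolding min_dominating_set_def dominating_set_def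
    by (auto intro: finite_subset)
  have D': "dominating_set V E D'" unfolding D'_def
    using min \<open>\<not> hi y \<le> hi g\<close>
    by (intro dominating_set_exchange[OF _ \<open>y \<in> V\<close> \<open>lo y \<le> c\<close> _ only_g])
      (auto simp: min_dominating_set_def)
  then have "card Ds \<le> card D'" using min unfolding min_dominating_set_def by blast
  have "y \<notin> Ds - {g}"
  proof
    assume "y \<in> Ds - {g}"
    then have "D' = Ds - {g}" unfolding D'_def by blast
    then have "card D' < card Ds" using card_Diff1_less[OF finite_Ds \<open>g \<in> Ds\<close>] by (simp only:)
    then show False using \<open>card Ds \<le> card D'\<close> by simp
  qed
  then have "card D' = card Ds"
    using finite_Ds \<open>g \<in> Ds\<close> card_gt_0_iff[of Ds] unfolding D'_def
    by (auto simp: card_Diff_singleton)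
  then have "sum hi D' \<le> sum hi Ds"
    using D' min by (intro maximal) (simp add: min_dominating_set_def)
  moreover have "sum hi D' = hi y + (sum hi Ds - hi g)"
    using finite_Ds \<open>y \<notin> Ds - {g}\<close> \<open>g \<in> Ds\<close> unfolding D'_def by (simp add: sum_diff1)
  ultimately show False using \<open>\<not> hi y \<le> hi g\<close> by linarith
qed

lemma rightmost_exchange:
  assumes Ds: "rightmost_min_dominating_set Ds"
    and D: "dominating_set V E D" and "\<not> Ds \<subseteq> D"
  shows "\<exists>g\<in>Ds - D. \<exists>x\<in>D - Ds. dominating_set V E (insert g (D - {x}))"
proof -
  have min: "min_dominating_set V E Ds" using Ds unfolding rightmost_min_dominating_set_def by blast
  then have "D \<inter> Ds \<subset> Ds" "finite Ds" using \<open>\<not> Ds \<subseteq> D\<close> finite_V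
    unfolding min_dominating_set_def dominating_set_def by (auto intro: finite_subset)
  then have "card (D \<inter> Ds) < card Ds" by (rule psubset_card_mono[rotated])
  then have "\<not> dominating_set V E (D \<inter> Ds)" using min unfolding min_dominating_set_def by force
  then have "{w \<in> V. \<forall>a\<in>D \<inter> Ds. \<not> meets w a} \<noteq> {}"
    using D unfolding dominating_set_iff_meets by auto
  then obtain u where u: "u \<in> V" "\<forall>a\<in>D \<inter> Ds. \<not> meets u a"
    and u_first: "\<And>w. w \<in> V \<Longrightarrow> \<forall>a\<in>D \<inter> Ds. \<not> meets w a \<Longrightarrow> hi u \<le> hi w"
    using ex_is_arg_min_if_finite[of "{w \<in> V. \<forall>a\<in>D \<inter> Ds. \<not> meets w a}" hi] finite_V
    unfolding is_arg_min_linorder by force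
  obtain g where g: "g \<in> Ds" "meets u g"
    using min u(1) unfolding min_dominating_set_def dominating_set_iff_meets by blast
  obtain x where x: "x \<in> D" "meets u x"
    using D u(1) unfolding dominating_set_iff_meets by blast
  have "g \<notin> D" "x \<notin> Ds" using g x u(2) by auto
  have "x \<in> V" "g \<in> V" using x D g min
    unfolding min_dominating_set_def dominating_set_def by auto
  have "hi x \<le> hi g"
    using \<open>meets u x\<close> \<open>g \<notin> D\<close> unfolding meets_def
    by (intro rightmost_exchange_bound[OF Ds \<open>g \<in> Ds\<close> \<open>x \<in> V\<close>, of "hi u"] u_first) auto
  then have "dominating_set V E (insert g (D - {x}))"
    using \<open>meets u g\<close> \<open>x \<notin> Ds\<close> unfolding meets_def
    by (intro dominating_set_exchange[OF D \<open>g \<in> V\<close>, of "hi u"] u_first) auto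
  then show ?thesis using g x \<open>g \<notin> D\<close> \<open>x \<notin> Ds\<close> by blast
qed

lemma canonical_dominating_set_exists: "\<exists>Ds. canonical_dominating_set V E Ds"
proof -
  obtain Ds where Ds: "rightmost_min_dominating_set Ds"
    using rightmost_min_dominating_set_exists by blast
  then have min: "min_dominating_set V E Ds" unfolding rightmost_min_dominating_set_def by blast
  then have "\<And>D. dominating_set V E D \<Longrightarrow> reconf V E (card D + 1) D Ds"
    using reconf_to_exchange_target[OF finite_V _ rightmost_exchange[OF Ds]]
    unfolding min_dominating_set_def by blast
  then show ?thesis using min unfolding canonical_dominating_set_def by blast
qed

end

theorem lemma11:
  fixes V :: "'a set" and E :: "'a \<Rightarrow> 'a \<Rightarrow> bool"
  assumes "interval_graph V E"
  shows "\<exists>Ds. canonical_dominating_set V E Ds"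
proof -
  obtain lo hi :: "'a \<Rightarrow> real" where "interval_model V E lo hi"
    using assms unfolding interval_graph_def interval_model_def by blast
  then show ?thesis by (rule interval_model.canonical_dominating_set_exists)
qed

end
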